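(* For integers $F\ge1$ and $0\le Z\le F$, $$s(F,2,Z)=\begin{cases}2F-3Z & \text{if } F\ge 2Z,\\ F-Z & \text{otherwise.}\end{cases}$$
   Context: A placement delivery array $S$-PDA$(F,K,Z)$ is an $F\times K$ array $R=(r_{j,k})$, $1\le j\le F$, $1\le k\le K$, over a finite set $S$ such that: (1) each cell is either empty or contains an element of $S$; (2) each column contains exactly $Z$ empty cells; (3) each element of $S$ occurs at most once in each row and at most once in each column; (4) if two distinct nonempty cells satisfy $r_{j_1,k_1}=r_{j_2,k_2}=t\in S$, then the cells $r_{j_1,k_2}$ and $r_{j_2,k_1}$ are empty. For integers $F,K\ge1$, $0\le Z\le F$, define $s(F,K,Z)=\min\{|S| : \text{there exists an } S\text{-PDA}(F,K,Z)\}$. *)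

theory Defs
  imports Main
begin

definition is_PDA :: "'a set \<Rightarrow> nat \<Rightarrow> nat \<Rightarrow> nat \<Rightarrow> (nat \<Rightarrow> nat \<Rightarrow> 'a option) \<Rightarrow> bool" where
  "is_PDA S F K Z R \<longleftrightarrow>
     (\<forall>j<F. \<forall>k<K. R j k = None \<or> (\<exists>t\<in>S. R j k = Some t)) \<and>
     (\<forall>k<K. card {j. j < F \<and> R j k = None} = Z) \<and>
     (\<forall>t\<in>S. \<forall>j<F. \<forall>k1<K. \<forall>k2<K. R j k1 = Some t \<and> R j k2 = Some t \<longrightarrow> k1 = k2) \<and>
     (\<forall>t\<in>S. \<forall>k<K. \<forall>j1<F. \<forall>j2<F. R j1 k = Some t \<and> R j2 k = Some t \<longrightarrow> j1 = j2) \<and>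
     (\<forall>t\<in>S. \<forall>j1<F. \<forall>j2<F. \<forall>k1<K. \<forall>k2<K.
        R j1 k1 = Some t \<and> R j2 k2 = Some t \<and> (j1, k1) \<noteq> (j2, k2) \<longrightarrow>
        R j1 k2 = None \<and> R j2 k1 = None)"

text \<open>s(F,K,Z): minimal size of a finite symbol set S admitting an S-PDA(F,K,Z).
  Symbols are taken from nat (any countably infinite supply gives the same minimum).\<close>

definition s_PDA :: "nat \<Rightarrow> nat \<Rightarrow> nat \<Rightarrow> nat" where
  "s_PDA F K Z = (LEAST n. \<exists>S :: nat set. finite S \<and> card S = n \<and> (\<exists>R. is_PDA S F K Z R))"

end

theory Submission
  imports Defs
begin

text \<open>Each column of a PDA carries F - Z distinct symbols. A symbol common to two columns
  sits in different rows of them (a symbol occurs at most once per row), so the cross condition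
  empties its row in the other column; hence at most min Z (F - Z) symbols are shared, and two
  columns need at least 2(F - Z) - min Z (F - Z) symbols. Conversely, the shared symbols of a
  two-column array can be placed exactly in the empty cells of the other column, which attains
  the bound.\<close>

lemma
  assumes "is_PDA S F K Z R"
  shows is_PDA_symbol: "\<lbrakk>j < F; k < K; R j k = Some t\<rbrakk> \<Longrightarrow> t \<in> S"
    and is_PDA_empty_cells: "k < K \<Longrightarrow> card {j. j < F \<and> R j k = None} = Z"
    and is_PDA_row_unique:
      "\<lbrakk>j < F; k < K; k' < K; R j k = Some t; R j k' = Some t\<rbrakk> \<Longrightarrow> k = k'"
    and is_PDA_column_unique:
      "\<lbrakk>j < F; j' < F; k < K; R j k = Some t; R j' k = Some t\<rbrakk> \<Longrightarrow> j = j'"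
    and is_PDA_cross_empty:
      "\<lbrakk>j < F; j' < F; k < K; k' < K; R j k = Some t; R j' k' = Some t; j \<noteq> j'\<rbrakk>
        \<Longrightarrow> R j k' = None"
proof -
  have cells: "\<forall>j<F. \<forall>k<K. R j k = None \<or> (\<exists>t\<in>S. R j k = Some t)"
    and empty: "\<forall>k<K. card {j. j < F \<and> R j k = None} = Z"
    and rows: "\<forall>t\<in>S. \<forall>j<F. \<forall>k1<K. \<forall>k2<K. R j k1 = Some t \<and> R j k2 = Some t \<longrightarrow> k1 = k2"
    and cols: "\<forall>t\<in>S. \<forall>k<K. \<forall>j1<F. \<forall>j2<F. R j1 k = Some t \<and> R j2 k = Some t \<longrightarrow> j1 = j2"
    and cross: "\<forall>t\<in>S. \<forall>j1<F. \<forall>j2<F. \<forall>k1<K. \<forall>k2<K.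
        R j1 k1 = Some t \<and> R j2 k2 = Some t \<and> (j1, k1) \<noteq> (j2, k2) \<longrightarrow>
        R j1 k2 = None \<and> R j2 k1 = None"
    using assms unfolding is_PDA_def by - (elim conjE, assumption)+
  show symbol: "t \<in> S" if "j < F" "k < K" "R j k = Some t" for j k t
    using cells that by fastforce
  show "k < K \<Longrightarrow> card {j. j < F \<and> R j k = None} = Z"
    using empty by blast
  show "k = k'" if "j < F" "k < K" "k' < K" "R j k = Some t" "R j k' = Some t" for j k k' t
    using rows symbol that by blast
  show "j = j'" if "j < F" "j' < F" "k < K" "R j k = Some t" "R j' k = Some t" for j j' k t
    using cols symbol that by blast
  show "R j k' = None"
    if "j < F" "j' < F" "k < K" "k' < K" "R j k = Some t" "R j' k' = Some t" "j \<noteq> j'"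
    for j j' k k' t
    using cross symbol that by blast
qed

definition column_symbols :: "(nat \<Rightarrow> nat \<Rightarrow> 'a option) \<Rightarrow> nat \<Rightarrow> nat \<Rightarrow> 'a set" where
  "column_symbols R F k = {t. \<exists>j<F. R j k = Some t}"

lemma column_symbols_eq_image:
  "column_symbols R F k = (\<lambda>j. the (R j k)) ` {j. j < F \<and> R j k \<noteq> None}"
  unfolding column_symbols_def by force

lemma finite_column_symbols: "finite (column_symbols R F k)"
  unfolding column_symbols_eq_image by simp

lemma column_symbols_subset:
  assumes "is_PDA S F K Z R" and "k < K"
  shows "column_symbols R F k \<subseteq> S"
  using is_PDA_symbol[OF assms(1) _ assms(2)] unfolding column_symbols_def by blast

lemma card_column_symbols:
  assumes P: "is_PDA S F K Z R" and k: "k < K"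
  shows "card (column_symbols R F k) = F - Z"
proof -
  let ?filled = "{j. j < F \<and> R j k \<noteq> None}"
  have "?filled = {..<F} - {j. j < F \<and> R j k = None}" by auto
  then have card_filled: "card ?filled = F - Z"
    using is_PDA_empty_cells[OF P k] by (simp add: card_Diff_subset subset_eq)
  have "inj_on (\<lambda>j. the (R j k)) ?filled"
  proof (rule inj_onI)
    fix i j assume "i \<in> ?filled" "j \<in> ?filled" "the (R i k) = the (R j k)"
    then obtain t where "i < F" "j < F" "R i k = Some t" "R j k = Some t" by auto
    then show "i = j" using is_PDA_column_unique[OF P _ _ k] by blast
  qed
  then show ?thesis
    using card_filled by (simp add: column_symbols_eq_image card_image)
qed

lemma card_common_column_symbols_le:
  assumes P: "is_PDA S F K Z R" and k: "k < K" "k' < K" "k \<noteq> k'"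
  shows "card (column_symbols R F k \<inter> column_symbols R F k') \<le> Z"
proof -
  define shared where "shared = {j. j < F \<and> R j k \<noteq> None \<and> the (R j k) \<in> column_symbols R F k'}"
  have image: "column_symbols R F k \<inter> column_symbols R F k' = (\<lambda>j. the (R j k)) ` shared"
    unfolding shared_def column_symbols_eq_image by auto
  have "shared \<subseteq> {j. j < F \<and> R j k' = None}"
  proof
    fix j assume "j \<in> shared"
    then obtain t j' where j: "j < F" "R j k = Some t" and j': "j' < F" "R j' k' = Some t"
      unfolding shared_def column_symbols_def by auto
    have "j \<noteq> j'" using is_PDA_row_unique[OF P _ k(1,2)] j j' k(3) by blast
    then have "R j k' = None" using is_PDA_cross_empty[OF P j(1) j'(1) k(1,2) j(2) j'(2)] by blast
    with j show "j \<in> {j. j < F \<and> R j k' = None}" by simp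
  qed
  then have "card shared \<le> Z"
    using is_PDA_empty_cells[OF P k(2)] card_mono[of "{j. j < F \<and> R j k' = None}"] by simp
  moreover have "finite shared" unfolding shared_def by simp
  ultimately show ?thesis
    unfolding image using card_image_le le_trans by blast
qed

lemma card_symbols_lower_bound:
  assumes P: "is_PDA S F K Z R" and "finite S" and "2 \<le> K"
  shows "2 * (F - Z) - min Z (F - Z) \<le> card S"
proof -
  let ?T0 = "column_symbols R F 0" and ?T1 = "column_symbols R F 1"
  have cards: "card ?T0 = F - Z" "card ?T1 = F - Z"
    using card_column_symbols[OF P] assms(3) by auto
  have "card (?T0 \<inter> ?T1) \<le> Z"
    using card_common_column_symbols_le[OF P] assms(3) by simp
  moreover have "card (?T0 \<inter> ?T1) \<le> F - Z"
    using cards(1) card_mono[OF finite_column_symbols Int_lower1, of R F 0 ?T1] by simp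
  moreover have "card (?T0 \<union> ?T1) + card (?T0 \<inter> ?T1) = 2 * (F - Z)"
    using card_Un_Int[OF finite_column_symbols finite_column_symbols, of R F 0 R F 1] cards by simp
  moreover have "card (?T0 \<union> ?T1) \<le> card S"
    using column_symbols_subset[OF P] assms(2,3) by (intro card_mono) auto
  ultimately show ?thesis by linarith
qed

text \<open>Column 0 has symbols 0, ..., m-1 in its first m rows and is empty in the next Z rows;
  column 1 repeats 0, ..., m-1 in rows m, ..., 2m-1 and is empty in the first m rows and
  in rows 2m, ..., m+Z-1. All other filled cells get fresh symbols.\<close>

definition two_column_PDA :: "nat \<Rightarrow> nat \<Rightarrow> nat \<Rightarrow> nat \<Rightarrow> nat \<Rightarrow> nat option" where
  "two_column_PDA F Z m j k =
     (if k = 0 then (if j < m then Some j else if j < m + Z then None else Some (j - Z))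
      else (if j < m then None else if j < 2 * m then Some (j - m) else if j < m + Z then None
            else Some (j - Z - m + (F - Z))))"

lemma is_PDA_two_column_PDA:
  assumes "Z \<le> F" "m \<le> Z" "m \<le> F - Z"
  shows "is_PDA {0..<2 * (F - Z) - m} F 2 Z (two_column_PDA F Z m)"
proof -
  have two: "\<And>k::nat. k < 2 \<longleftrightarrow> k = 0 \<or> k = 1" by auto
  have "{j. j < F \<and> two_column_PDA F Z m j 0 = None} = {m..<m + Z}"
    using assms by (auto simp: two_column_PDA_def)
  moreover have "{j. j < F \<and> two_column_PDA F Z m j 1 = None} = {..<m} \<union> {2 * m..<m + Z}"
    using assms by (auto simp: two_column_PDA_def)
  moreover have "card ({..<m} \<union> {2 * m..<m + Z}) = Z"
    using assms by (subst card_Un_disjoint) auto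
  ultimately have empty_cells: "\<forall>k<2. card {j. j < F \<and> two_column_PDA F Z m j k = None} = Z"
    unfolding two by auto
  show ?thesis
    unfolding is_PDA_def
  proof (intro conjI)
    show "\<forall>k<2. card {j. j < F \<and> two_column_PDA F Z m j k = None} = Z" by (fact empty_cells)
  qed (use assms in \<open>auto simp: two_column_PDA_def two split: if_splits\<close>)
qed

lemma s_PDA_eqI:
  fixes S :: "nat set"
  assumes "is_PDA S F K Z R" "finite S" "card S = n"
    and "\<And>S' :: nat set. \<And>R'. finite S' \<Longrightarrow> is_PDA S' F K Z R' \<Longrightarrow> n \<le> card S'"
  shows "s_PDA F K Z = n"
  unfolding s_PDA_def using assms by (intro Least_equality) blast+

theorem mainTheorem4:
  fixes F Z :: nat
  assumes "F \<ge> 1" and "Z \<le> F"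
  shows "s_PDA F 2 Z = (if F \<ge> 2 * Z then 2 * F - 3 * Z else F - Z)"
proof -
  let ?n = "2 * (F - Z) - min Z (F - Z)"
  have "s_PDA F 2 Z = ?n"
  proof (rule s_PDA_eqI)
    show "is_PDA {0..<?n} F 2 Z (two_column_PDA F Z (min Z (F - Z)))"
      using assms(2) by (intro is_PDA_two_column_PDA) auto
    show "?n \<le> card S" if "finite S" "is_PDA S F 2 Z R" for S :: "nat set" and R
      using card_symbols_lower_bound that by blast
  qed simp_all
  then show ?thesis by auto
qed

end
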